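(* Let $N\geq1$, $0\leq m\leq2$ and $\beta>0$. Let $a\in C(\mathbb{R}^N)\cap L^\infty(\mathbb{R}^N)$ with $a^+=\max\{0,a\}\not\equiv0$ and $\limsup_{|x|\to\infty}a(x)<0$. Let $J\in L^1(\mathbb{R}^N)$ be nonnegative, radially symmetric, with $\int_{\mathbb{R}^N}J=1$ and $\int_{\mathbb{R}^N}J(x)|x|^\beta\,\mathrm{d}x<\infty$; set $J_\varepsilon(z)=\varepsilon^{-N}J(z/\varepsilon)$. Then for every $\varepsilon>0$ there exist a constant $C_{\varepsilon,\beta}>0$ and a positive function $\overline{u}_{\varepsilon,\beta}\in C_0(\mathbb{R}^N)$ such that $$a^+(x)\leq\overline{u}_{\varepsilon,\beta}(x)\leq\frac{C_{\varepsilon,\beta}}{1+|x|^\beta}\quad\text{for all }x\in\mathbb{R}^N,$$ and $$\frac{1}{\varepsilon^m}\big(J_\varepsilon\ast\overline{u}_{\varepsilon,\beta}-\overline{u}_{\varepsilon,\beta}\big)+\overline{u}_{\varepsilon,\beta}(a-\overline{u}_{\varepsilon,\beta})\leq0\quad\text{in }\mathbb{R}^N.$$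
   Context: $(J_\varepsilon\ast u)(x)=\int_{\mathbb{R}^N}J_\varepsilon(x-y)u(y)\,\mathrm{d}y$. $C_0(\mathbb{R}^N)$ denotes continuous functions vanishing at infinity. *)

theory Defs
  imports "HOL-Analysis.Analysis"
begin

definition Jeps :: "real \<Rightarrow> ('a::euclidean_space \<Rightarrow> real) \<Rightarrow> 'a \<Rightarrow> real" where
  "Jeps \<epsilon> J z = (1 / \<epsilon> ^ DIM('a)) * J ((1 / \<epsilon>) *\<^sub>R z)"

definition conv :: "('a::euclidean_space \<Rightarrow> real) \<Rightarrow> ('a \<Rightarrow> real) \<Rightarrow> 'a \<Rightarrow> real" where
  "conv K u x = (\<integral>y. K (x - y) * u y \<partial>lborel)"

end

theory Submission
  imports Defs
begin

text \<open>
  The supersolution is a large multiple of the profile (1 + |x|^2)^(-beta/2). Since J has a finite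
  beta-moment, the convolution of J_eps with the profile exceeds the profile by an arbitrarily small
  relative amount far out, where a stays below some -delta < 0; there the reaction term absorbs
  the excess whatever the multiple is. On the remaining ball the profile is bounded below, so the
  reaction term, quadratic in the multiple, dominates the convolution term, which is only linear.
\<close>

lemma nn_integral_affine:
  fixes f :: "'a::euclidean_space \<Rightarrow> ennreal" and c :: real
  assumes [measurable]: "f \<in> borel_measurable borel" and c: "c \<noteq> 0"
  shows "(\<integral>\<^sup>+x. f x \<partial>lborel)
           = ennreal (\<bar>c\<bar> ^ DIM('a)) * (\<integral>\<^sup>+x. f (t + c *\<^sub>R x) \<partial>lborel)"
  by (subst lborel_affine[OF c, of t])
     (simp add: nn_integral_density nn_integral_distr nn_integral_cmult)

lemma lborel_integrable_affine:
  fixes f :: "'a::euclidean_space \<Rightarrow> 'b::{banach, second_countable_topology}"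
  assumes f: "integrable lborel f" and c: "c \<noteq> 0"
  shows "integrable lborel (\<lambda>x. f (t + c *\<^sub>R x))"
  using f f[THEN borel_measurable_integrable] c unfolding integrable_iff_bounded
  by (subst (asm) nn_integral_affine[where c=c and t=t]) (auto simp: ennreal_mult_less_top)

lemma lborel_integrable_affine_iff:
  fixes f :: "'a::euclidean_space \<Rightarrow> 'b::{banach, second_countable_topology}"
  assumes c: "c \<noteq> 0"
  shows "integrable lborel (\<lambda>x. f (t + c *\<^sub>R x)) \<longleftrightarrow> integrable lborel f"
  using lborel_integrable_affine[of f c t]
    lborel_integrable_affine[of "\<lambda>x. f (t + c *\<^sub>R x)" "1/c" "-t/\<^sub>R c"] c
  by (auto simp: field_simps)

lemma lborel_integral_affine:
  fixes f :: "'a::euclidean_space \<Rightarrow> 'b::{banach, second_countable_topology}"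
  assumes c: "c \<noteq> 0"
  shows "(\<integral>x. f x \<partial>lborel) = \<bar>c\<bar> ^ DIM('a) *\<^sub>R (\<integral>x. f (t + c *\<^sub>R x) \<partial>lborel)"
proof cases
  assume f[measurable]: "integrable lborel f"
  then show ?thesis
    using c f[THEN borel_measurable_integrable] f[THEN lborel_integrable_affine, of c t]
    by (subst lborel_affine[OF c, of t]) (simp add: integral_density integral_distr)
next
  assume "\<not> integrable lborel f"
  with c show ?thesis
    by (simp add: lborel_integrable_affine_iff not_integrable_integral_eq)
qed

definition finite_moment_density :: "real \<Rightarrow> ('a::euclidean_space \<Rightarrow> real) \<Rightarrow> bool" where
  "finite_moment_density \<beta> K \<longleftrightarrow> integrable lborel K \<and> (\<forall>z. K z \<ge> 0) \<and>
     (\<integral>z. K z \<partial>lborel) = 1 \<and> integrable lborel (\<lambda>z. K z * norm z powr \<beta>)"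

lemma finite_moment_density_Jeps:
  assumes J: "finite_moment_density \<beta> J" and \<epsilon>: "\<epsilon> > 0"
  shows "finite_moment_density \<beta> (Jeps \<epsilon> J)"
proof -
  have J_int: "integrable lborel J" and J_nonneg: "\<And>z. J z \<ge> 0" and J_1: "(\<integral>z. J z \<partial>lborel) = 1"
    and J_moment: "integrable lborel (\<lambda>z. J z * norm z powr \<beta>)"
    using J by (auto simp: finite_moment_density_def)
  have "integrable lborel (Jeps \<epsilon> J)"
    using lborel_integrable_affine[OF J_int, of "1/\<epsilon>" 0] \<epsilon> by (simp add: Jeps_def[abs_def])
  moreover have "Jeps \<epsilon> J z \<ge> 0" for z
    using J_nonneg \<epsilon> by (simp add: Jeps_def)
  moreover have "(\<integral>z. Jeps \<epsilon> J z \<partial>lborel) = (\<integral>z. J z \<partial>lborel)"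
    using lborel_integral_affine[of "1/\<epsilon>" J 0] \<epsilon> by (simp add: Jeps_def power_divide)
  moreover have "Jeps \<epsilon> J z * norm z powr \<beta>
      = \<epsilon> powr \<beta> / \<epsilon> ^ DIM('a) * (J ((1/\<epsilon>) *\<^sub>R z) * norm ((1/\<epsilon>) *\<^sub>R z) powr \<beta>)" for z :: 'a
  proof -
    have "norm z = \<epsilon> * norm ((1/\<epsilon>) *\<^sub>R z)"
      using \<epsilon> by simp
    then have "norm z powr \<beta> = \<epsilon> powr \<beta> * norm ((1/\<epsilon>) *\<^sub>R z) powr \<beta>"
      using \<epsilon> by (simp add: powr_divide)
    then show ?thesis
      by (simp add: Jeps_def)
  qed
  then have "integrable lborel (\<lambda>z. Jeps \<epsilon> J z * norm z powr \<beta>)"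
    using lborel_integrable_affine[OF J_moment, of "1/\<epsilon>" 0] \<epsilon> by simp
  ultimately show ?thesis
    using J_1 by (simp add: finite_moment_density_def)
qed

lemma one_add_power2_pos: "0 < 1 + (x::real)\<^sup>2"
  by (simp add: add_pos_nonneg)

definition bracket_decay :: "real \<Rightarrow> 'a::real_normed_vector \<Rightarrow> real" where
  "bracket_decay \<beta> x = (1 + (norm x)\<^sup>2) powr (-\<beta>/2)"

lemma bracket_decay_pos: "bracket_decay \<beta> x > 0"
  unfolding bracket_decay_def using one_add_power2_pos[of "norm x"] by simp

lemma bracket_decay_le_one: "\<beta> \<ge> 0 \<Longrightarrow> bracket_decay \<beta> x \<le> 1"
  unfolding bracket_decay_def using powr_mono2'[of "-\<beta>/2" 1 "1 + (norm x)\<^sup>2"] by simp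

lemma abs_bracket_decay_le_one: "\<beta> \<ge> 0 \<Longrightarrow> \<bar>bracket_decay \<beta> x\<bar> \<le> 1"
  using bracket_decay_pos[of \<beta> x] bracket_decay_le_one[of \<beta> x] by simp

lemma bracket_decay_ge:
  assumes "\<beta> \<ge> 0" and "norm x \<le> r"
  shows "(1 + r\<^sup>2) powr (-\<beta>/2) \<le> bracket_decay \<beta> x"
  unfolding bracket_decay_def using assms
  by (intro powr_mono2') (auto intro!: add_pos_nonneg power_mono)

lemma continuous_on_bracket_decay: "continuous_on UNIV (bracket_decay \<beta>)"
  unfolding bracket_decay_def[abs_def]
  by (intro continuous_intros) (auto simp: add_pos_nonneg less_imp_neq[symmetric])

lemma borel_measurable_bracket_decay [measurable]: "bracket_decay \<beta> \<in> borel_measurable borel"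
  using continuous_on_bracket_decay by (rule borel_measurable_continuous_onI)

lemma tendsto_bracket_decay_at_infinity:
  assumes "\<beta> > 0"
  shows "(bracket_decay \<beta> \<longlongrightarrow> 0) at_infinity"
  unfolding bracket_decay_def[abs_def]
proof (rule tendsto_neg_powr)
  show "- \<beta> / 2 < 0"
    using assms by simp
  have "filterlim (\<lambda>x::'a. (norm x)\<^sup>2) at_top at_infinity"
    by (intro filterlim_pow_at_top filterlim_norm_at_top) auto
  then show "filterlim (\<lambda>x::'a. 1 + (norm x)\<^sup>2) at_top at_infinity"
    by (rule filterlim_tendsto_add_at_top[OF tendsto_const])
qed

lemma powr_half_power2:
  assumes "(x::real) \<ge> 0"
  shows "(x\<^sup>2) powr (\<gamma>/2) = x powr \<gamma>"
proof -
  have "x\<^sup>2 = x powr 2"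
    using assms by simp
  then show ?thesis
    by (simp add: powr_powr)
qed

lemma bracket_decay_le_inverse:
  assumes "\<beta> > 0"
  shows "bracket_decay \<beta> x \<le> 2 / (1 + norm x powr \<beta>)"
proof -
  let ?q = "(1 + (norm x)\<^sup>2) powr (\<beta>/2)"
  have "norm x powr \<beta> \<le> ?q"
    using assms by (subst powr_half_power2[symmetric]) (auto intro: powr_mono2)
  moreover have "1 \<le> ?q"
    using assms by (intro ge_one_powr_ge_zero) auto
  ultimately have "1 + norm x powr \<beta> \<le> 2 * ?q" and "?q > 0"
    by linarith+
  have "bracket_decay \<beta> x = 2 / (2 * ?q)"
    by (simp add: bracket_decay_def powr_minus_divide)
  also have "\<dots> \<le> 2 / (1 + norm x powr \<beta>)"
    using \<open>1 + norm x powr \<beta> \<le> 2 * ?q\<close> \<open>?q > 0\<close>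
    by (intro divide_left_mono mult_pos_pos add_pos_nonneg) auto
  finally show ?thesis .
qed

lemma bracket_decay_ge_inverse:
  assumes "\<beta> > 0" and x: "norm x \<ge> 1"
  shows "2 powr (-\<beta>/2) / norm x powr \<beta> \<le> bracket_decay \<beta> x"
proof -
  have "1 + (norm x)\<^sup>2 \<le> 2 * (norm x)\<^sup>2"
    using x by (simp add: one_le_power)
  have "2 powr (-\<beta>/2) / norm x powr \<beta> = 2 powr (-\<beta>/2) * norm x powr (-\<beta>)"
    by (simp add: powr_minus_divide)
  also have "norm x powr (-\<beta>) = ((norm x)\<^sup>2) powr (-\<beta>/2)"
    by (rule powr_half_power2[symmetric]) simp
  also have "2 powr (-\<beta>/2) * ((norm x)\<^sup>2) powr (-\<beta>/2) = (2 * (norm x)\<^sup>2) powr (-\<beta>/2)"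
    by (rule powr_mult[symmetric])
  also have "\<dots> \<le> bracket_decay \<beta> x"
    unfolding bracket_decay_def using assms \<open>1 + (norm x)\<^sup>2 \<le> 2 * (norm x)\<^sup>2\<close>
    by (intro powr_mono2') (auto simp: add_pos_nonneg)
  finally show ?thesis .
qed

lemma bracket_decay_diff_le_near:
  fixes x z :: "'a::real_normed_vector"
  assumes \<beta>: "\<beta> > 0" and t: "0 < t" "t < 1" and z: "norm z \<le> t * norm x"
  shows "bracket_decay \<beta> (x - z) \<le> (1 - t) powr (-\<beta>) * bracket_decay \<beta> x"
proof -
  have "(1 - t) * norm x \<le> norm (x - z)"
    using norm_triangle_ineq2[of x z] z by (simp add: algebra_simps)
  then have "((1 - t) * norm x)\<^sup>2 \<le> (norm (x - z))\<^sup>2"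
    using t by (intro power_mono) auto
  moreover have "(1 - t)\<^sup>2 \<le> 1"
    using t by (simp add: power_le_one)
  ultimately have "(1 - t)\<^sup>2 * (1 + (norm x)\<^sup>2) \<le> 1 + (norm (x - z))\<^sup>2"
    by (simp add: power_mult_distrib distrib_left)
  then have "bracket_decay \<beta> (x - z) \<le> ((1 - t)\<^sup>2 * (1 + (norm x)\<^sup>2)) powr (-\<beta>/2)"
    unfolding bracket_decay_def using \<beta> t by (intro powr_mono2') (auto simp: add_pos_nonneg)
  also have "\<dots> = ((1 - t)\<^sup>2) powr (-\<beta>/2) * bracket_decay \<beta> x"
    unfolding bracket_decay_def by (simp add: powr_mult add_nonneg_nonneg)
  also have "((1 - t)\<^sup>2) powr (-\<beta>/2) = (1 - t) powr (-\<beta>)"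
    using t by (intro powr_half_power2) simp
  finally show ?thesis .
qed

lemma bracket_decay_diff_le:
  fixes x z :: "'a::real_normed_vector"
  assumes \<beta>: "\<beta> > 0" and t: "0 < t" "t < 1" and x: "x \<noteq> 0"
  shows "bracket_decay \<beta> (x - z) \<le> (1 - t) powr (-\<beta>) * bracket_decay \<beta> x
           + indicator {z. t * norm x < norm z} z * norm z powr \<beta> / (t * norm x) powr \<beta>"
proof (cases "norm z \<le> t * norm x")
  case True
  then show ?thesis
    using bracket_decay_diff_le_near[OF \<beta> t True] by simp
next
  case False
  have "bracket_decay \<beta> (x - z) \<le> 1"
    using \<beta> by (simp add: bracket_decay_le_one)
  also have "1 \<le> norm z powr \<beta> / (t * norm x) powr \<beta>"
    using False \<beta> t x by (simp add: powr_mono2)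
  also have "\<dots> \<le> (1 - t) powr (-\<beta>) * bracket_decay \<beta> x + norm z powr \<beta> / (t * norm x) powr \<beta>"
    by (simp add: bracket_decay_pos less_imp_le)
  finally show ?thesis
    using False by simp
qed

lemma integrable_mult_bounded:
  fixes f g :: "'a \<Rightarrow> real"
  assumes f: "integrable M f" and [measurable]: "g \<in> borel_measurable M"
    and g: "\<And>x. \<bar>g x\<bar> \<le> B"
  shows "integrable M (\<lambda>x. f x * g x)"
proof (rule Bochner_Integration.integrable_bound[OF integrable_mult_right[OF f, of B]])
  have "B \<ge> 0"
    using abs_ge_zero[of "g undefined"] g[of undefined] by linarith
  moreover have "\<bar>f x\<bar> * \<bar>g x\<bar> \<le> \<bar>f x\<bar> * B" for x
    using g by (intro mult_left_mono) auto
  ultimately show "AE x in M. norm (f x * g x) \<le> norm (B * f x)"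
    by (simp add: abs_mult mult.commute)
qed (use f in simp)

lemma conv_eq_integral_shift: "conv K u x = (\<integral>z. K z * u (x - z) \<partial>lborel)"
  using lborel_integral_affine[of "-1" "\<lambda>z. K z * u (x - z)" x] by (simp add: conv_def)

lemma conv_const_mult: "conv K (\<lambda>y. c * u y) x = c * conv K u x"
  by (simp add: conv_def mult.left_commute)

lemma integrable_conv_bounded:
  fixes K u :: "'a::euclidean_space \<Rightarrow> real"
  assumes "integrable lborel K" and [measurable]: "u \<in> borel_measurable borel"
    and "\<And>y. \<bar>u y\<bar> \<le> B"
  shows "integrable lborel (\<lambda>y. K (x - y) * u y)"
proof -
  have "integrable lborel (\<lambda>z. K z * u (x - z))"
    using assms by (intro integrable_mult_bounded[where B = B]) auto
  then show ?thesis
    using lborel_integrable_affine[of "\<lambda>z. K z * u (x - z)" "-1" x] by simp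
qed

lemma conv_le_bound:
  fixes K u :: "'a::euclidean_space \<Rightarrow> real"
  assumes K: "integrable lborel K" and K_nonneg: "\<And>z. K z \<ge> 0" and K_1: "(\<integral>z. K z \<partial>lborel) = 1"
    and [measurable]: "u \<in> borel_measurable borel" and u: "\<And>y. \<bar>u y\<bar> \<le> B"
  shows "conv K u x \<le> B"
proof -
  have "B \<ge> 0"
    using abs_ge_zero[of "u x"] u[of x] by linarith
  have "conv K u x = (\<integral>z. K z * u (x - z) \<partial>lborel)"
    by (rule conv_eq_integral_shift)
  also have "\<dots> \<le> (\<integral>z. K z * B \<partial>lborel)"
    using K K_nonneg u \<open>B \<ge> 0\<close>
    by (intro integral_mono integrable_mult_bounded mult_left_mono) (auto simp: abs_le_iff)
  also have "\<dots> = B"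
    using K_1 by simp
  finally show ?thesis .
qed

lemma tendsto_tail_integral:
  fixes g :: "'a::euclidean_space \<Rightarrow> real"
  assumes g: "integrable lborel g"
  shows "((\<lambda>r. \<integral>z. indicator {z. r < norm z} z * g z \<partial>lborel) \<longlongrightarrow> 0) at_top"
proof -
  have [measurable]: "g \<in> borel_measurable borel"
    using g by (simp add: borel_measurable_integrable)
  have "((\<lambda>r. \<integral>z. indicator {z. r < norm z} z * g z \<partial>lborel)
          \<longlongrightarrow> (\<integral>(z::'a). 0 \<partial>lborel)) at_top"
  proof (rule integral_dominated_convergence_at_top[where w = "\<lambda>z. \<bar>g z\<bar>"])
    show "AE z in lborel. ((\<lambda>r. indicator {z. r < norm z} z * g z) \<longlongrightarrow> 0) at_top"
    proof (intro AE_I2 tendsto_eventually)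
      fix z :: 'a
      show "\<forall>\<^sub>F r in at_top. indicator {z. r < norm z} z * g z = 0"
        using eventually_ge_at_top[of "norm z"] by eventually_elim simp
    qed
  qed (use g in \<open>auto simp: indicator_def\<close>)
  then show ?thesis
    by simp
qed

lemma conv_bracket_decay_le:
  fixes K :: "'a::euclidean_space \<Rightarrow> real"
  assumes "finite_moment_density \<beta> K" and \<beta>: "\<beta> > 0" and t: "0 < t" "t < 1" and x: "x \<noteq> 0"
  shows "conv K (bracket_decay \<beta>) x \<le> (1 - t) powr (-\<beta>) * bracket_decay \<beta> x
           + (\<integral>z. indicator {z. t * norm x < norm z} z * (K z * norm z powr \<beta>) \<partial>lborel)
               / (t * norm x) powr \<beta>"
proof -
  have K: "integrable lborel K" and K_nonneg: "\<And>z. K z \<ge> 0" and K_1: "(\<integral>z. K z \<partial>lborel) = 1"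
    and K_moment: "integrable lborel (\<lambda>z. K z * norm z powr \<beta>)"
    using assms(1) by (auto simp: finite_moment_density_def)
  let ?tail = "\<lambda>z. indicator {z. t * norm x < norm z} z * (K z * norm z powr \<beta>)"
  have K_tail: "integrable lborel ?tail"
    using integrable_mult_indicator[OF _ K_moment, of "{z. t * norm x < norm z}"] by auto
  have "conv K (bracket_decay \<beta>) x = (\<integral>z. K z * bracket_decay \<beta> (x - z) \<partial>lborel)"
    by (rule conv_eq_integral_shift)
  also have "\<dots> \<le> (\<integral>z. (1 - t) powr (-\<beta>) * bracket_decay \<beta> x * K z
                     + ?tail z / (t * norm x) powr \<beta> \<partial>lborel)"
  proof (rule integral_mono)
    show "integrable lborel (\<lambda>z. K z * bracket_decay \<beta> (x - z))"
      using K abs_bracket_decay_le_one[OF less_imp_le[OF \<beta>]]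
      by (intro integrable_mult_bounded[where B = 1]) auto
    show "integrable lborel (\<lambda>z. (1 - t) powr (-\<beta>) * bracket_decay \<beta> x * K z
              + ?tail z / (t * norm x) powr \<beta>)"
      using K K_tail by simp
    fix z
    have "K z * bracket_decay \<beta> (x - z) \<le> K z * ((1 - t) powr (-\<beta>) * bracket_decay \<beta> x
            + indicator {z. t * norm x < norm z} z * norm z powr \<beta> / (t * norm x) powr \<beta>)"
      using \<beta> t x K_nonneg by (intro mult_left_mono bracket_decay_diff_le) auto
    then show "K z * bracket_decay \<beta> (x - z)
        \<le> (1 - t) powr (-\<beta>) * bracket_decay \<beta> x * K z + ?tail z / (t * norm x) powr \<beta>"
      by (simp add: algebra_simps)
  qed
  also have "\<dots> = (1 - t) powr (-\<beta>) * bracket_decay \<beta> x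
                   + (\<integral>z. ?tail z \<partial>lborel) / (t * norm x) powr \<beta>"
    using K K_tail K_1 by simp
  finally show ?thesis .
qed

lemma conv_bracket_decay_eventually_le:
  fixes K :: "'a::euclidean_space \<Rightarrow> real"
  assumes K: "finite_moment_density \<beta> K" and \<beta>: "\<beta> > 0" and \<eta>: "\<eta> > 0"
  shows "\<forall>\<^sub>F x in at_infinity. conv K (bracket_decay \<beta>) x \<le> (1 + \<eta>) * bracket_decay \<beta> x"
proof -
  \<comment> \<open>t is chosen so that the part of the kernel inside the ball of radius t |x| costs a factor
      1 + eta/2, and theta so that the remaining tail costs at most eta/2 times the profile.\<close>
  define t where "t = 1 - (1 + \<eta>/2) powr (-1/\<beta>)"
  have t: "0 < t" "t < 1"
    using \<beta> \<eta> powr_less_one[of "1 + \<eta>/2" "-1/\<beta>"] by (auto simp: t_def)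
  have t_powr: "(1 - t) powr (-\<beta>) = 1 + \<eta>/2"
    using \<beta> \<eta> by (simp add: t_def powr_powr)
  define \<theta> where "\<theta> = \<eta>/2 * t powr \<beta> * 2 powr (-\<beta>/2)"
  define tail where "tail r = (\<integral>z. indicator {z. r < norm z} z * (K z * norm z powr \<beta>) \<partial>lborel)" for r
  have "filterlim (\<lambda>x::'a. t * norm x) at_top at_infinity"
    using t by (intro filterlim_tendsto_pos_mult_at_top[OF tendsto_const] filterlim_norm_at_top)
  then have "((\<lambda>x::'a. tail (t * norm x)) \<longlongrightarrow> 0) at_infinity"
    using K unfolding tail_def finite_moment_density_def
    by (intro filterlim_compose[OF tendsto_tail_integral]) auto
  moreover have "\<theta> > 0"
    using \<eta> t by (simp add: \<theta>_def)
  ultimately have "\<forall>\<^sub>F x::'a in at_infinity. tail (t * norm x) < \<theta>"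
    by (rule order_tendstoD(2))
  moreover have "\<forall>\<^sub>F x::'a in at_infinity. 1 \<le> norm x"
    by (auto simp: eventually_at_infinity)
  ultimately show ?thesis
  proof eventually_elim
    case (elim x)
    then have x: "x \<noteq> 0" and r: "t * norm x > 0"
      using t by (auto simp: zero_less_mult_iff)
    have "conv K (bracket_decay \<beta>) x
        \<le> (1 + \<eta>/2) * bracket_decay \<beta> x + tail (t * norm x) / (t * norm x) powr \<beta>"
      using conv_bracket_decay_le[OF K \<beta> t x] by (simp add: t_powr tail_def)
    also have "tail (t * norm x) / (t * norm x) powr \<beta> \<le> \<theta> / (t * norm x) powr \<beta>"
      using elim r by (intro divide_right_mono) auto
    also have "\<theta> / (t * norm x) powr \<beta> = \<eta>/2 * (2 powr (-\<beta>/2) / norm x powr \<beta>)"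
      using t elim by (simp add: \<theta>_def powr_mult)
    also have "\<dots> \<le> \<eta>/2 * bracket_decay \<beta> x"
      using bracket_decay_ge_inverse[OF \<beta> elim(2)] \<eta> by (intro mult_left_mono) auto
    finally show ?case
      by (simp add: algebra_simps)
  qed
qed

lemma Limsup_less_zero_imp_eventually_le:
  assumes "Limsup F (\<lambda>x. ereal (f x)) < 0"
  shows "\<exists>\<delta>>0. \<forall>\<^sub>F x in F. f x \<le> - \<delta>"
proof -
  obtain d where d: "Limsup F (\<lambda>x. ereal (f x)) < ereal d" "d < 0"
    using ereal_dense2[OF assms] by auto
  have "\<forall>\<^sub>F x in F. f x \<le> - (- d)"
    using Limsup_lessD[OF d(1)] by (auto elim: eventually_mono)
  then show ?thesis
    using d(2) by (intro exI[of _ "- d"]) auto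
qed

lemma bracket_decay_supersolution_at_infinity:
  fixes K a :: "'a::euclidean_space \<Rightarrow> real"
  assumes K: "finite_moment_density \<beta> K" and \<beta>: "\<beta> > 0" and c: "c > 0"
    and \<delta>: "\<delta> > 0" and a_far: "\<forall>\<^sub>F x in at_infinity. a x \<le> - \<delta>"
  shows "\<forall>\<^sub>F x in at_infinity. \<forall>M \<ge> 0. a x \<le> M * bracket_decay \<beta> x \<and>
           conv K (\<lambda>y. M * bracket_decay \<beta> y) x - M * bracket_decay \<beta> x
             \<le> c * (M * bracket_decay \<beta> x) * (M * bracket_decay \<beta> x - a x)"
  using a_far conv_bracket_decay_eventually_le[OF K \<beta> mult_pos_pos[OF c \<delta>]]
proof eventually_elim
  case (elim x)
  let ?u = "\<lambda>M. M * bracket_decay \<beta> x"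
  show ?case
  proof (intro allI impI conjI)
    fix M :: real
    assume M: "M \<ge> 0"
    then have u: "?u M \<ge> 0"
      by (simp add: bracket_decay_pos less_imp_le)
    then show "a x \<le> ?u M"
      using elim \<delta> by linarith
    have "conv K (\<lambda>y. M * bracket_decay \<beta> y) x - ?u M \<le> M * ((1 + c * \<delta>) * bracket_decay \<beta> x) - ?u M"
      using elim M unfolding conv_const_mult by (intro diff_right_mono mult_left_mono) auto
    also have "\<dots> = c * ?u M * \<delta>"
      by (simp add: algebra_simps)
    also have "\<dots> \<le> c * ?u M * (?u M - a x)"
      using elim c u by (intro mult_left_mono) auto
    finally show "conv K (\<lambda>y. M * bracket_decay \<beta> y) x - ?u M \<le> c * ?u M * (?u M - a x)" .
  qed
qed

lemma bracket_decay_supersolution_on_ball: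
  fixes K a :: "'a::euclidean_space \<Rightarrow> real"
  assumes K: "integrable lborel K" and K_nonneg: "\<And>z. K z \<ge> 0" and K_1: "(\<integral>z. K z \<partial>lborel) = 1"
    and \<beta>: "\<beta> \<ge> 0" and c: "c > 0" and a_bound: "\<And>x. \<bar>a x\<bar> \<le> A"
  shows "\<exists>M>0. \<forall>x. norm x \<le> R \<longrightarrow> a x \<le> M * bracket_decay \<beta> x \<and>
           conv K (\<lambda>y. M * bracket_decay \<beta> y) x - M * bracket_decay \<beta> x
             \<le> c * (M * bracket_decay \<beta> x) * (M * bracket_decay \<beta> x - a x)"
proof -
  define p where "p = (1 + R\<^sup>2) powr (-\<beta>/2)"
  have p: "p > 0"
    using one_add_power2_pos[of R] by (simp add: p_def)
  \<comment> \<open>With u \<ge> M p on the ball, M p - A = 1/(c p) gives c u (u - a) \<ge> c (M p) (M p - A) = M,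
      and M bounds the convolution term.\<close>
  define M where "M = (A + 1 / (c * p)) / p"
  have M_p: "M * p - A = 1 / (c * p)"
    using p by (simp add: M_def)
  have M: "M > 0"
    using a_bound[of 0] c p by (simp add: M_def add_nonneg_pos)
  show ?thesis
  proof (intro exI[of _ M] conjI allI impI M)
    fix x :: 'a
    let ?u = "M * bracket_decay \<beta> x"
    assume "norm x \<le> R"
    with \<beta> have "p \<le> bracket_decay \<beta> x"
      unfolding p_def by (rule bracket_decay_ge)
    then have u: "M * p \<le> ?u"
      using M by simp
    then have gap: "1 / (c * p) \<le> ?u - a x"
      using M_p a_bound[of x] by (simp add: abs_le_iff)
    then show "a x \<le> ?u"
      using divide_pos_pos[OF zero_less_one mult_pos_pos[OF c p]] by linarith
    have "conv K (bracket_decay \<beta>) x \<le> 1"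
      using K K_nonneg K_1 abs_bracket_decay_le_one[OF \<beta>] by (intro conv_le_bound) auto
    then have "conv K (\<lambda>y. M * bracket_decay \<beta> y) x \<le> M"
      using M unfolding conv_const_mult by (simp add: mult_left_le)
    moreover have "?u > 0"
      using M by (simp add: bracket_decay_pos)
    ultimately have "conv K (\<lambda>y. M * bracket_decay \<beta> y) x - ?u \<le> M"
      by linarith
    also have "M = c * (M * p) * (1 / (c * p))"
      using c p by simp
    also have "\<dots> \<le> c * ?u * (?u - a x)"
      using c u gap M p by (intro mult_left_mono mult_mono) auto
    finally show "conv K (\<lambda>y. M * bracket_decay \<beta> y) x - ?u \<le> c * ?u * (?u - a x)" .
  qed
qed

lemma bracket_decay_supersolution:
  fixes K a :: "'a::euclidean_space \<Rightarrow> real"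
  assumes K: "finite_moment_density \<beta> K" and \<beta>: "\<beta> > 0" and c: "c > 0"
    and a_bounded: "bounded (range a)" and a_limsup: "Limsup at_infinity (\<lambda>x. ereal (a x)) < 0"
  shows "\<exists>M>0. \<forall>x. a x \<le> M * bracket_decay \<beta> x \<and>
           conv K (\<lambda>y. M * bracket_decay \<beta> y) x - M * bracket_decay \<beta> x
             \<le> c * (M * bracket_decay \<beta> x) * (M * bracket_decay \<beta> x - a x)"
proof -
  obtain \<delta> where "\<delta> > 0" and "\<forall>\<^sub>F x in at_infinity. a x \<le> - \<delta>"
    using Limsup_less_zero_imp_eventually_le[OF a_limsup] by blast
  then obtain R where far: "\<And>x M. R \<le> norm x \<Longrightarrow> M \<ge> 0 \<Longrightarrow> a x \<le> M * bracket_decay \<beta> x \<and>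
      conv K (\<lambda>y. M * bracket_decay \<beta> y) x - M * bracket_decay \<beta> x
        \<le> c * (M * bracket_decay \<beta> x) * (M * bracket_decay \<beta> x - a x)"
    using bracket_decay_supersolution_at_infinity[OF K \<beta> c] unfolding eventually_at_infinity by blast
  obtain A where "\<And>x. \<bar>a x\<bar> \<le> A"
    using a_bounded unfolding bounded_iff by auto
  then obtain M where "M > 0" and near: "\<And>x. norm x \<le> R \<Longrightarrow> a x \<le> M * bracket_decay \<beta> x \<and>
      conv K (\<lambda>y. M * bracket_decay \<beta> y) x - M * bracket_decay \<beta> x
        \<le> c * (M * bracket_decay \<beta> x) * (M * bracket_decay \<beta> x - a x)"
    using bracket_decay_supersolution_on_ball[of K \<beta> c a A R] K \<beta> c
    by (auto simp: finite_moment_density_def)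
  then show ?thesis
    using far[of _ M] by (meson linorder_le_cases less_imp_le)
qed

theorem lemma3p2:
  fixes a :: "'a::euclidean_space \<Rightarrow> real"
    and J :: "'a \<Rightarrow> real"
    and m \<beta> :: real
  assumes "0 \<le> m" and "m \<le> 2" and "\<beta> > 0"
    and "continuous_on UNIV a" and "bounded (range a)"
    and "\<exists>x. max 0 (a x) \<noteq> 0"
    and "Limsup at_infinity (\<lambda>x. ereal (a x)) < 0"
    and "integrable lborel J"
    and "\<And>x. J x \<ge> 0"
    and "\<And>x y. norm x = norm y \<Longrightarrow> J x = J y"
    and "(\<integral>x. J x \<partial>lborel) = 1"
    and "integrable lborel (\<lambda>x. J x * norm x powr \<beta>)"
  shows "\<forall>\<epsilon>>0. \<exists>C>0. \<exists>u :: 'a \<Rightarrow> real.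
           (\<forall>x. u x > 0) \<and> continuous_on UNIV u \<and> (u \<longlongrightarrow> 0) at_infinity \<and>
           (\<forall>x. max 0 (a x) \<le> u x \<and> u x \<le> C / (1 + norm x powr \<beta>)) \<and>
           (\<forall>x. integrable lborel (\<lambda>y. Jeps \<epsilon> J (x - y) * u y)) \<and>
           (\<forall>x. (1 / \<epsilon> powr m) * (conv (Jeps \<epsilon> J) u x - u x) + u x * (a x - u x) \<le> 0)"
proof (intro allI impI)
  fix \<epsilon> :: real
  assume \<epsilon>: "\<epsilon> > 0"
  have K: "finite_moment_density \<beta> (Jeps \<epsilon> J)"
    using assms(8,9,11,12) \<epsilon> by (intro finite_moment_density_Jeps) (simp_all add: finite_moment_density_def)
  obtain M where M: "M > 0" and super: "\<And>x. a x \<le> M * bracket_decay \<beta> x \<and>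
      conv (Jeps \<epsilon> J) (\<lambda>y. M * bracket_decay \<beta> y) x - M * bracket_decay \<beta> x
        \<le> \<epsilon> powr m * (M * bracket_decay \<beta> x) * (M * bracket_decay \<beta> x - a x)"
    using bracket_decay_supersolution[OF K assms(3) _ assms(5,7), of "\<epsilon> powr m"] \<epsilon> by auto
  define u where "u x = M * bracket_decay \<beta> x" for x :: 'a
  have u_pos: "u x > 0" for x
    using M by (simp add: u_def bracket_decay_pos)
  show "\<exists>C>0. \<exists>u :: 'a \<Rightarrow> real.
           (\<forall>x. u x > 0) \<and> continuous_on UNIV u \<and> (u \<longlongrightarrow> 0) at_infinity \<and>
           (\<forall>x. max 0 (a x) \<le> u x \<and> u x \<le> C / (1 + norm x powr \<beta>)) \<and>
           (\<forall>x. integrable lborel (\<lambda>y. Jeps \<epsilon> J (x - y) * u y)) \<and>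
           (\<forall>x. (1 / \<epsilon> powr m) * (conv (Jeps \<epsilon> J) u x - u x) + u x * (a x - u x) \<le> 0)"
  proof (intro exI[of _ "2 * M"] exI[of _ u] conjI allI u_pos)
    fix x :: 'a
    show "2 * M > 0" "continuous_on UNIV u" "(u \<longlongrightarrow> 0) at_infinity"
      using M tendsto_mult_right_zero[OF tendsto_bracket_decay_at_infinity[OF assms(3)]]
      by (auto simp: u_def[abs_def] intro: continuous_on_mult_left continuous_on_bracket_decay)
    show "max 0 (a x) \<le> u x"
      using super[of x] u_pos[of x] by (simp add: u_def)
    show "u x \<le> 2 * M / (1 + norm x powr \<beta>)"
      using mult_left_mono[OF bracket_decay_le_inverse[OF assms(3)], of M x] M by (simp add: u_def mult.commute)
    show "integrable lborel (\<lambda>y. Jeps \<epsilon> J (x - y) * u y)"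
      using K M abs_bracket_decay_le_one[OF less_imp_le[OF assms(3)]]
      by (intro integrable_conv_bounded[where B = M]) (auto simp: u_def abs_mult finite_moment_density_def)
    show "(1 / \<epsilon> powr m) * (conv (Jeps \<epsilon> J) u x - u x) + u x * (a x - u x) \<le> 0"
      using super[of x] \<epsilon> unfolding u_def[abs_def] by (simp add: field_simps)
  qed
qed
end
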